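(* Let $p$ be an odd prime, $R$ a commutative $\mathbb{Z}_{(p)}$-algebra (viewed as a Tambara functor for the trivial group $e$), and $\{\underline E_*^{C_{p^s}}\}_{s\ge0}$ an $e$-equivariant Witt complex over $R$. Set $B^*_{s+1}:=\underline E_*^{C_{p^s}}(C_{p^s}/C_{p^s})$, a differential graded ring, and make $\{B^*_\bullet\}$ a pro-system with structure maps the ring maps $r:B^*_{s+1}\to B^*_s$ obtained by evaluating $r:\zeta_{C_p}\underline E^{C_{p^s}}_*\to\underline E_*^{C_{p^{s-1}}}$ at $C_{p^{s-1}}/C_{p^{s-1}}$. Then $B^*_\bullet$, with $\lambda: W_{s+1}(R)\cong\underline{\mathbb W}_{C_{p^s}}(R)(C_{p^s}/C_{p^s})\to B^0_{s+1}$, $F=\mathrm{res}^{C_{p^s}}_{C_{p^{s-1}}}$ and $V=\mathrm{tr}^{C_{p^s}}_{C_{p^{s-1}}}$, is a (classical) Witt complex over $R$.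
   Context: Here $\nu=1$. A $C_n$-equivariant Witt complex (specialized to $n=1$, $\nu=1$) over $R$ consists of graded $C_{p^s}$-Green functors $\underline E_*^{C_{p^s}}$ ($s\ge0$) with isomorphisms $i^*_{C_{p^k}}\underline E_*^{C_{p^s}}\cong\underline E_*^{C_{p^k}}$ for $k<s$; differentials $d$ making each $\underline E_*^{C_{p^s}}(C_{p^s}/C_{p^q})$ a differential graded ring, compatible with these isomorphisms; maps of $C_{p^{s-1}}$-Green functors $r:\zeta_{C_p}\underline E_*^{C_{p^s}}\to\underline E_*^{C_{p^{s-1}}}$ for $s\ge1$ ($\zeta_{C_p}$ = categorical $C_p$-fixed point Mackey functor, i.e. pullback along inflation $\mathrm{Span}(\mathrm{Fin}_{C_{p^s}/C_p})\to\mathrm{Span}(\mathrm{Fin}_{C_{p^s}})$); maps of Green functors $\lambda:\underline{\mathbb W}_{C_{p^s}}(R)\to\underline E_0^{C_{p^s}}$; satisfying (i) $\lambda r=r\lambda$, $dr=rd$; (ii) $\mathrm{res}^L_Hd\,\mathrm{tr}^L_H=d$ and $\mathrm{res}^L_H\mathrm{tr}^L_H=[L:H]$ for $H\subseteq L\subseteq C_{p^s}$; (iii) $i^*_{C_{p^{k-1}}}Fd\lambda([x]_k)=\lambda([x]_{k-1})^{p-1}d\lambda([x]_{k-1})$ for $x\in R$, $k\ge1$, where $F=\mathrm{res}^{C_{p^k}}_{C_{p^{k-1}}}$. Here $\underline{\mathbb W}_{C_{p^s}}(R)=\underline{\mathrm{HH}}^{C_{p^s}}_e(R)_0$, with $\underline{\mathbb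 W}_{C_{p^s}}(R)(C_{p^s}/C_{p^s})\cong W_{s+1}(R)$ (the $p$-typical Witt vectors); $r$ on Witt vectors corresponds to the classical restriction $R$; $[-]_k:R\to\underline{\mathbb W}_{C_{p^k}}(R)(C_{p^k}/C_{p^k})$ is the equivariant multiplicative lift (unit $R\to i_e^*N_e^{C_{p^k}}R$, internal norm $n_e^{C_{p^k}}$, quotient map). Classical Witt complex over $R$ (Hesselholt–Madsen): a pro-differential graded ring $E^*_\bullet$ with a strict map of pro-rings $\lambda:W_\bullet(R)\to E^0_\bullet$; a strict map of pro-graded rings $F:E^*_\bullet\to E^*_{\bullet-1}$ with $\lambda F=F\lambda$ and $Fd\lambda([a]_k)=\lambda([a]_{k-1})^{p-1}d\lambda([a]_{k-1})$ for $a\in R$, where $[a]_k=(a,0,\dots,0)\in W_{k+1}(R)$; and a strict map of graded $E^*_\bullet$-modules $V:F_*E^*_{\bullet-1}\to E^*_\bullet$ with $\lambda V=V\lambda$, $FdV=d$ and $FV=p$. *)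

theory Defs
  imports Complex_Main "HOL-Algebra.Ring" "HOL-Algebra.RingHom" "HOL-Library.Poly_Mapping"
          "HOL-Computational_Algebra.Primes"
begin

type_synonym wpoly = "(nat \<Rightarrow>\<^sub>0 nat) \<Rightarrow>\<^sub>0 rat"

definition wvar :: "nat \<Rightarrow> wpoly" where
  "wvar i = Poly_Mapping.single (Poly_Mapping.single i 1) 1"

definition ghost :: "nat \<Rightarrow> (nat \<Rightarrow> wpoly) \<Rightarrow> nat \<Rightarrow> wpoly" where
  "ghost p x k = (\<Sum>i\<le>k. of_nat (p ^ i) * x i ^ (p ^ (k - i)))"

text \<open>Given ghost targets G_k, the unique polynomials Z_k with w_k(Z) = G_k
  (recursively Z_k = (G_k - sum_{i<k} p^i Z_i^(p^(k-i))) / p^k).\<close>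
primrec ghost_inv_list :: "nat \<Rightarrow> (nat \<Rightarrow> wpoly) \<Rightarrow> nat \<Rightarrow> wpoly list" where
  "ghost_inv_list p G 0 = []"
| "ghost_inv_list p G (Suc k) =
     (let L = ghost_inv_list p G k
      in L @ [Poly_Mapping.map (\<lambda>c. c / of_nat (p ^ k))
                (G k - (\<Sum>i<k. of_nat (p ^ i) * (L ! i) ^ (p ^ (k - i))))])"

definition ghost_inv :: "nat \<Rightarrow> (nat \<Rightarrow> wpoly) \<Rightarrow> nat \<Rightarrow> wpoly" where
  "ghost_inv p G k = ghost_inv_list p G (Suc k) ! k"

text \<open>Evaluation of a polynomial in a commutative ring.  The Witt polynomials have
  integer coefficients, so taking the floor of each coefficient is exact.\<close>
definition peval :: "wpoly \<Rightarrow> (nat \<Rightarrow> 'r::comm_ring_1) \<Rightarrow> 'r" where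
  "peval P v = (\<Sum>m\<in>Poly_Mapping.keys P.
      of_int \<lfloor>Poly_Mapping.lookup P m\<rfloor> * (\<Prod>i\<in>Poly_Mapping.keys m. v i ^ Poly_Mapping.lookup m i))"

text \<open>Variables X_i = x_(2i), Y_i = x_(2i+1).\<close>
definition witt_sum_poly :: "nat \<Rightarrow> nat \<Rightarrow> wpoly" where
  "witt_sum_poly p = ghost_inv p (\<lambda>k. ghost p (\<lambda>i. wvar (2*i)) k + ghost p (\<lambda>i. wvar (2*i+1)) k)"

definition witt_prod_poly :: "nat \<Rightarrow> nat \<Rightarrow> wpoly" where
  "witt_prod_poly p = ghost_inv p (\<lambda>k. ghost p (\<lambda>i. wvar (2*i)) k * ghost p (\<lambda>i. wvar (2*i+1)) k)"

definition witt_frob_poly :: "nat \<Rightarrow> nat \<Rightarrow> wpoly" where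
  "witt_frob_poly p = ghost_inv p (\<lambda>k. ghost p wvar (Suc k))"

definition interleave :: "(nat \<Rightarrow> 'r) \<Rightarrow> (nat \<Rightarrow> 'r) \<Rightarrow> nat \<Rightarrow> 'r" where
  "interleave a b j = (if even j then a (j div 2) else b (j div 2))"

definition witt_ring :: "nat \<Rightarrow> nat \<Rightarrow> (nat \<Rightarrow> 'r::comm_ring_1) ring" where
  "witt_ring p n =
    \<lparr>carrier = {a. \<forall>i\<ge>n. a i = 0},
     monoid.mult = (\<lambda>a b i. if i < n then peval (witt_prod_poly p i) (interleave a b) else 0),
     one = (\<lambda>i. if i = 0 \<and> 0 < n then 1 else 0),
     zero = (\<lambda>i. 0),
     add = (\<lambda>a b i. if i < n then peval (witt_sum_poly p i) (interleave a b) else 0)\<rparr>"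

text \<open>Witt vector Frobenius F : W_(n+1)(R) -> W_n(R).\<close>
definition witt_F :: "nat \<Rightarrow> nat \<Rightarrow> (nat \<Rightarrow> 'r::comm_ring_1) \<Rightarrow> nat \<Rightarrow> 'r" where
  "witt_F p n a = (\<lambda>i. if i < n then peval (witt_frob_poly p i) a else 0)"

text \<open>Verschiebung V : W_n(R) -> W_(n+1)(R).\<close>
definition witt_V :: "nat \<Rightarrow> (nat \<Rightarrow> 'r::zero) \<Rightarrow> nat \<Rightarrow> 'r" where
  "witt_V n a = (\<lambda>i. if i = 0 \<or> n < i then 0 else a (i - 1))"

text \<open>Restriction R : W_(n+1)(R) -> W_n(R) (truncation).\<close>
definition witt_R :: "nat \<Rightarrow> (nat \<Rightarrow> 'r::zero) \<Rightarrow> nat \<Rightarrow> 'r" where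
  "witt_R n a = (\<lambda>i. if i < n then a i else 0)"

definition teich :: "nat \<Rightarrow> 'r::zero \<Rightarrow> nat \<Rightarrow> 'r" where
  "teich n x = (\<lambda>i. if i = 0 \<and> 0 < n then x else 0)"

definition graded_ring :: "('e, 'm) ring_scheme \<Rightarrow> (nat \<Rightarrow> 'e set) \<Rightarrow> bool" where
  "graded_ring A G \<longleftrightarrow> ring A \<and>
     (\<forall>n. subgroup (G n) (add_monoid A)) \<and>
     (\<forall>m n x y. x \<in> G m \<longrightarrow> y \<in> G n \<longrightarrow> x \<otimes>\<^bsub>A\<^esub> y \<in> G (m + n)) \<and>
     \<one>\<^bsub>A\<^esub> \<in> G 0 \<and>
     (\<forall>x\<in>carrier A. \<exists>!c. (\<forall>n. c n \<in> G n) \<and> finite {n. c n \<noteq> \<zero>\<^bsub>A\<^esub>} \<and>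
                          x = finsum A c {n. c n \<noteq> \<zero>\<^bsub>A\<^esub>})"

definition gsign :: "('e, 'm) ring_scheme \<Rightarrow> nat \<Rightarrow> 'e \<Rightarrow> 'e" where
  "gsign A m x = (if even m then x else \<ominus>\<^bsub>A\<^esub> x)"

definition dg_ring :: "('e, 'm) ring_scheme \<Rightarrow> (nat \<Rightarrow> 'e set) \<Rightarrow> ('e \<Rightarrow> 'e) \<Rightarrow> bool" where
  "dg_ring A G d \<longleftrightarrow> graded_ring A G \<and>
     d \<in> carrier A \<rightarrow> carrier A \<and>
     (\<forall>x\<in>carrier A. \<forall>y\<in>carrier A. d (x \<oplus>\<^bsub>A\<^esub> y) = d x \<oplus>\<^bsub>A\<^esub> d y) \<and>
     (\<forall>n. d ` G n \<subseteq> G (Suc n)) \<and>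
     (\<forall>m x y. x \<in> G m \<longrightarrow> y \<in> carrier A \<longrightarrow>
        d (x \<otimes>\<^bsub>A\<^esub> y) = (d x \<otimes>\<^bsub>A\<^esub> y) \<oplus>\<^bsub>A\<^esub> gsign A m (x \<otimes>\<^bsub>A\<^esub> d y)) \<and>
     (\<forall>x\<in>carrier A. d (d x) = \<zero>\<^bsub>A\<^esub>)"

definition graded_ring_hom ::
  "('e, 'm) ring_scheme \<Rightarrow> (nat \<Rightarrow> 'e set) \<Rightarrow> ('f, 'n) ring_scheme \<Rightarrow> (nat \<Rightarrow> 'f set) \<Rightarrow> ('e \<Rightarrow> 'f) \<Rightarrow> bool" where
  "graded_ring_hom A GA B GB f \<longleftrightarrow> f \<in> ring_hom A B \<and> (\<forall>n. f ` GA n \<subseteq> GB n)"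

definition graded_add_hom ::
  "('e, 'm) ring_scheme \<Rightarrow> (nat \<Rightarrow> 'e set) \<Rightarrow> ('f, 'n) ring_scheme \<Rightarrow> (nat \<Rightarrow> 'f set) \<Rightarrow> ('e \<Rightarrow> 'f) \<Rightarrow> bool" where
  "graded_add_hom A GA B GB f \<longleftrightarrow> f \<in> hom (add_monoid A) (add_monoid B) \<and> (\<forall>n. f ` GA n \<subseteq> GB n)"

text \<open>Level q stands for the orbit C_(p^s)/C_(p^q), 0 <= q <= s.  Res q : level q -> level (q-1),
  Tr q : level (q-1) -> level q, C q = action of a fixed generator g of C_(p^s) (Weyl action)
  on level q.\<close>
definition cyc_green_functor ::
  "nat \<Rightarrow> nat \<Rightarrow> (nat \<Rightarrow> 'e ring) \<Rightarrow> (nat \<Rightarrow> nat \<Rightarrow> 'e set) \<Rightarrow>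
   (nat \<Rightarrow> 'e \<Rightarrow> 'e) \<Rightarrow> (nat \<Rightarrow> 'e \<Rightarrow> 'e) \<Rightarrow> (nat \<Rightarrow> 'e \<Rightarrow> 'e) \<Rightarrow> bool" where
  "cyc_green_functor p s E G Res Tr C \<longleftrightarrow>
     (\<forall>q\<le>s. graded_ring (E q) (G q)) \<and>
     (\<forall>q. 1 \<le> q \<and> q \<le> s \<longrightarrow>
        graded_ring_hom (E q) (G q) (E (q - 1)) (G (q - 1)) (Res q) \<and>
        graded_add_hom (E (q - 1)) (G (q - 1)) (E q) (G q) (Tr q)) \<and>
     (\<forall>q\<le>s. graded_ring_hom (E q) (G q) (E q) (G q) (C q) \<and>
        (\<forall>x\<in>carrier (E q). (C q ^^ (p ^ (s - q))) x = x)) \<and>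
     (\<forall>q. 1 \<le> q \<and> q \<le> s \<longrightarrow>
        (\<forall>x\<in>carrier (E q). Res q (C q x) = C (q - 1) (Res q x)) \<and>
        (\<forall>x\<in>carrier (E (q - 1)). Tr q (C (q - 1) x) = C q (Tr q x)) \<and>
        (\<forall>x\<in>carrier (E (q - 1)).
           Res q (Tr q x) = finsum (E (q - 1)) (\<lambda>j. (C (q - 1) ^^ (j * p ^ (s - q))) x) {..<p}) \<and>
        (\<forall>x\<in>carrier (E (q - 1)). \<forall>y\<in>carrier (E q).
           Tr q (x \<otimes>\<^bsub>E (q - 1)\<^esub> Res q y) = Tr q x \<otimes>\<^bsub>E q\<^esub> y \<and>
           Tr q (Res q y \<otimes>\<^bsub>E (q - 1)\<^esub> x) = y \<otimes>\<^bsub>E q\<^esub> Tr q x))"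

primrec itres :: "(nat \<Rightarrow> 'e \<Rightarrow> 'e) \<Rightarrow> nat \<Rightarrow> nat \<Rightarrow> 'e \<Rightarrow> 'e" where
  "itres Res q 0 x = x"
| "itres Res q (Suc k) x = Res (q - k) (itres Res q k x)"

primrec ittr :: "(nat \<Rightarrow> 'e \<Rightarrow> 'e) \<Rightarrow> nat \<Rightarrow> nat \<Rightarrow> 'e \<Rightarrow> 'e" where
  "ittr Tr q 0 x = x"
| "ittr Tr q (Suc k) x = Tr q (ittr Tr (q - 1) k x)"

section \<open>e-equivariant Witt complexes (n = 1, nu = 1)\<close>

text \<open>E s q = value of the C_(p^s)-Green functor at C_(p^s)/C_(p^q) (total graded ring, graded pieces G s q);
  D s q its differential; Th s k q : E s q -> E k q (q <= k < s) the isomorphisms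
  i^*_(C_(p^k)) E^(C_(p^s)) = E^(C_(p^k)); Rr s q : E s q -> E (s-1) (q-1) the map r;
  Lam s q : W_(q+1)(R) -> degree 0 of E s q the map lambda (the Witt Green functor for C_(p^s)
  has value W_(q+1)(R) at level q, restriction F, transfer V, trivial Weyl action, r = R).\<close>
definition equiv_witt_complex ::
  "nat \<Rightarrow> (nat \<Rightarrow> nat \<Rightarrow> 'e ring) \<Rightarrow> (nat \<Rightarrow> nat \<Rightarrow> nat \<Rightarrow> 'e set) \<Rightarrow> (nat \<Rightarrow> nat \<Rightarrow> 'e \<Rightarrow> 'e) \<Rightarrow>
   (nat \<Rightarrow> nat \<Rightarrow> 'e \<Rightarrow> 'e) \<Rightarrow> (nat \<Rightarrow> nat \<Rightarrow> 'e \<Rightarrow> 'e) \<Rightarrow> (nat \<Rightarrow> nat \<Rightarrow> 'e \<Rightarrow> 'e) \<Rightarrow>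
   (nat \<Rightarrow> nat \<Rightarrow> nat \<Rightarrow> 'e \<Rightarrow> 'e) \<Rightarrow> (nat \<Rightarrow> nat \<Rightarrow> 'e \<Rightarrow> 'e) \<Rightarrow>
   (nat \<Rightarrow> nat \<Rightarrow> (nat \<Rightarrow> 'r::comm_ring_1) \<Rightarrow> 'e) \<Rightarrow> bool" where
  "equiv_witt_complex p E G D Res Tr C Th Rr Lam \<longleftrightarrow>
     \<comment> \<open>graded Green functors\<close>
     (\<forall>s. cyc_green_functor p s (E s) (G s) (Res s) (Tr s) (C s)) \<and>
     \<comment> \<open>differentials\<close>
     (\<forall>s q. q \<le> s \<longrightarrow> dg_ring (E s q) (G s q) (D s q)) \<and>
     \<comment> \<open>isomorphisms of Green functors i^* E^(C_(p^s)) = E^(C_(p^k)), compatible with d\<close>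
     (\<forall>s k q. q \<le> k \<and> k < s \<longrightarrow>
        graded_ring_hom (E s q) (G s q) (E k q) (G k q) (Th s k q) \<and>
        bij_betw (Th s k q) (carrier (E s q)) (carrier (E k q)) \<and>
        (\<forall>n. Th s k q ` G s q n = G k q n) \<and>
        (\<forall>x\<in>carrier (E s q). Th s k q ((C s q ^^ (p ^ (s - k))) x) = C k q (Th s k q x)) \<and>
        (\<forall>x\<in>carrier (E s q). Th s k q (D s q x) = D k q (Th s k q x))) \<and>
     (\<forall>s k q. 1 \<le> q \<and> q \<le> k \<and> k < s \<longrightarrow>
        (\<forall>x\<in>carrier (E s q). Th s k (q - 1) (Res s q x) = Res k q (Th s k q x)) \<and>
        (\<forall>x\<in>carrier (E s (q - 1)). Th s k q (Tr s q x) = Tr k q (Th s k (q - 1) x))) \<and>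
     \<comment> \<open>r : zeta_(C_p) E^(C_(p^s)) -> E^(C_(p^(s-1))) map of Green functors\<close>
     (\<forall>s q. 1 \<le> q \<and> q \<le> s \<longrightarrow>
        graded_ring_hom (E s q) (G s q) (E (s - 1) (q - 1)) (G (s - 1) (q - 1)) (Rr s q) \<and>
        (\<forall>x\<in>carrier (E s q). Rr s q (C s q x) = C (s - 1) (q - 1) (Rr s q x))) \<and>
     (\<forall>s q. 2 \<le> q \<and> q \<le> s \<longrightarrow>
        (\<forall>x\<in>carrier (E s q). Rr s (q - 1) (Res s q x) = Res (s - 1) (q - 1) (Rr s q x)) \<and>
        (\<forall>x\<in>carrier (E s (q - 1)). Rr s q (Tr s q x) = Tr (s - 1) (q - 1) (Rr s (q - 1) x))) \<and>
     \<comment> \<open>lambda : Witt Green functor -> E_0 map of Green functors\<close>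
     (\<forall>s q. q \<le> s \<longrightarrow>
        Lam s q \<in> ring_hom (witt_ring p (Suc q)) (E s q) \<and>
        Lam s q ` carrier (witt_ring p (Suc q)) \<subseteq> G s q 0 \<and>
        (\<forall>a\<in>carrier (witt_ring p (Suc q)). C s q (Lam s q a) = Lam s q a)) \<and>
     (\<forall>s q. 1 \<le> q \<and> q \<le> s \<longrightarrow>
        (\<forall>a\<in>carrier (witt_ring p (Suc q)). Res s q (Lam s q a) = Lam s (q - 1) (witt_F p q a)) \<and>
        (\<forall>b\<in>carrier (witt_ring p q). Lam s q (witt_V q b) = Tr s q (Lam s (q - 1) b))) \<and>
     \<comment> \<open>compatibility of r and lambda with the isomorphisms\<close>
     (\<forall>s k q. q \<le> k \<and> k < s \<longrightarrow>
        (\<forall>a\<in>carrier (witt_ring p (Suc q)). Th s k q (Lam s q a) = Lam k q a)) \<and>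
     (\<forall>s k q. 1 \<le> q \<and> q \<le> k \<and> k < s \<longrightarrow>
        (\<forall>x\<in>carrier (E s q). Rr k q (Th s k q x) = Th (s - 1) (k - 1) (q - 1) (Rr s q x))) \<and>
     \<comment> \<open>(i) lambda r = r lambda, d r = r d\<close>
     (\<forall>s q. 1 \<le> q \<and> q \<le> s \<longrightarrow>
        (\<forall>a\<in>carrier (witt_ring p (Suc q)). Rr s q (Lam s q a) = Lam (s - 1) (q - 1) (witt_R q a)) \<and>
        (\<forall>x\<in>carrier (E s q). D (s - 1) (q - 1) (Rr s q x) = Rr s q (D s q x))) \<and>
     \<comment> \<open>(ii) res d tr = d and res tr = [L:H]\<close>
     (\<forall>s j q. j \<le> q \<and> q \<le> s \<longrightarrow> (\<forall>x\<in>carrier (E s j).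
        itres (Res s) q (q - j) (D s q (ittr (Tr s) q (q - j) x)) = D s j x \<and>
        itres (Res s) q (q - j) (ittr (Tr s) q (q - j) x) = [(p ^ (q - j))] \<cdot>\<^bsub>E s j\<^esub> x)) \<and>
     \<comment> \<open>(iii) i^* F d lambda([x]_k) = lambda([x]_(k-1))^(p-1) d lambda([x]_(k-1))\<close>
     (\<forall>k (x::'r). 1 \<le> k \<longrightarrow>
        Th k (k - 1) (k - 1) (Res k k (D k k (Lam k k (teich (Suc k) x)))) =
          (Lam (k - 1) (k - 1) (teich k x)) [^]\<^bsub>E (k - 1) (k - 1)\<^esub> (p - 1)
            \<otimes>\<^bsub>E (k - 1) (k - 1)\<^esub> D (k - 1) (k - 1) (Lam (k - 1) (k - 1) (teich k x)))"

text \<open>Index s stands for E_(s+1) (which receives W_(s+1)(R)); Rm s : B (s+1) -> B s are the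
  structure maps of the pro-system.\<close>
definition witt_complex ::
  "nat \<Rightarrow> (nat \<Rightarrow> 'e ring) \<Rightarrow> (nat \<Rightarrow> nat \<Rightarrow> 'e set) \<Rightarrow> (nat \<Rightarrow> 'e \<Rightarrow> 'e) \<Rightarrow>
   (nat \<Rightarrow> 'e \<Rightarrow> 'e) \<Rightarrow> (nat \<Rightarrow> (nat \<Rightarrow> 'r::comm_ring_1) \<Rightarrow> 'e) \<Rightarrow>
   (nat \<Rightarrow> 'e \<Rightarrow> 'e) \<Rightarrow> (nat \<Rightarrow> 'e \<Rightarrow> 'e) \<Rightarrow> bool" where
  "witt_complex p B GB dB Rm lam F V \<longleftrightarrow>
     \<comment> \<open>pro-differential graded ring\<close>
     (\<forall>s. dg_ring (B s) (GB s) (dB s)) \<and>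
     (\<forall>s. graded_ring_hom (B (Suc s)) (GB (Suc s)) (B s) (GB s) (Rm s) \<and>
          (\<forall>x\<in>carrier (B (Suc s)). Rm s (dB (Suc s) x) = dB s (Rm s x))) \<and>
     \<comment> \<open>lambda strict map of pro-rings W_.(R) -> E^0_.\<close>
     (\<forall>s. lam s \<in> ring_hom (witt_ring p (Suc s)) (B s) \<and>
          lam s ` carrier (witt_ring p (Suc s)) \<subseteq> GB s 0 \<and>
          (\<forall>a\<in>carrier (witt_ring p (Suc (Suc s))). lam s (witt_R (Suc s) a) = Rm s (lam (Suc s) a))) \<and>
     \<comment> \<open>F strict map of pro-graded rings\<close>
     (\<forall>s. graded_ring_hom (B (Suc s)) (GB (Suc s)) (B s) (GB s) (F s) \<and>
          (\<forall>x\<in>carrier (B (Suc (Suc s))). F s (Rm (Suc s) x) = Rm s (F (Suc s) x)) \<and>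
          (\<forall>a\<in>carrier (witt_ring p (Suc (Suc s))). lam s (witt_F p (Suc s) a) = F s (lam (Suc s) a)) \<and>
          (\<forall>a::'r. F s (dB (Suc s) (lam (Suc s) (teich (Suc (Suc s)) a))) =
             (lam s (teich (Suc s) a)) [^]\<^bsub>B s\<^esub> (p - 1) \<otimes>\<^bsub>B s\<^esub> dB s (lam s (teich (Suc s) a)))) \<and>
     \<comment> \<open>V strict map of graded modules F_* E_(.-1) -> E_.\<close>
     (\<forall>s. graded_add_hom (B s) (GB s) (B (Suc s)) (GB (Suc s)) (V s) \<and>
          (\<forall>y\<in>carrier (B (Suc s)). Rm (Suc s) (V (Suc s) y) = V s (Rm s y)) \<and>
          (\<forall>a\<in>carrier (witt_ring p (Suc s)). lam (Suc s) (witt_V (Suc s) a) = V s (lam s a)) \<and>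
          (\<forall>x\<in>carrier (B (Suc s)). \<forall>y\<in>carrier (B s).
             V s (F s x \<otimes>\<^bsub>B s\<^esub> y) = x \<otimes>\<^bsub>B (Suc s)\<^esub> V s y \<and>
             V s (y \<otimes>\<^bsub>B s\<^esub> F s x) = V s y \<otimes>\<^bsub>B (Suc s)\<^esub> x) \<and>
          (\<forall>y\<in>carrier (B s). F s (dB (Suc s) (V s y)) = dB s y \<and>
             F s (V s y) = [p] \<cdot>\<^bsub>B s\<^esub> y))"

end

theory Submission
  imports Defs "HOL-Algebra.QuotRing"
begin

text \<open>The classical Witt complex lives at the top levels \<open>B(s+1) = E^(C_p^s)(C_p^s/C_p^s)\<close>, and the
  level \<open>C_p^(s+1)/C_p^s\<close> just below the top is identified with \<open>B(s+1)\<close> by the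
  isomorphism \<open>i^* E^(C_p^(s+1)) = E^(C_p^s)\<close>.  So \<open>F\<close> is restriction followed by this
  isomorphism and \<open>V\<close> is its inverse followed by transfer, and every Witt complex axiom is an
  axiom of the equivariant Witt complex transported along the isomorphism: \<open>FV = p\<close> and
  \<open>FdV = d\<close> are \<open>res tr = [C_p^(s+1) : C_p^s]\<close> and \<open>res d tr = d\<close>, the projection formula
  is Frobenius reciprocity of the Green functor, and the compatibilities with \<open>R\<close> and \<open>\<lambda>\<close>
  hold because \<open>r\<close> and \<open>\<lambda>\<close> are maps of Green functors compatible with the isomorphisms.\<close>

lemma ring_hom_add_pow:
  fixes n :: nat
  assumes "f \<in> ring_hom A B" "ring A" "ring B" "x \<in> carrier A"
  shows "f ([n] \<cdot>\<^bsub>A\<^esub> x) = [n] \<cdot>\<^bsub>B\<^esub> f x"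
proof -
  interpret ring_hom_ring A B f using assms by (intro ring_hom_ringI2) auto
  show ?thesis using group_hom.hom_nat_pow[OF a_group_hom, of x n] assms(4)
    by (simp add: add_pow_def)
qed

lemma graded_ring_subset_carrier: "graded_ring A G \<Longrightarrow> G n \<subseteq> carrier A"
  unfolding graded_ring_def using subgroup.subset by fastforce

lemma graded_ring_hom_comp:
  assumes "graded_ring_hom A GA B GB f" and "graded_ring_hom B GB C GC g"
  shows "graded_ring_hom A GA C GC (g \<circ> f)"
  using assms ring_hom_trans image_mono order_trans
  unfolding graded_ring_hom_def image_comp[symmetric] by metis

lemma graded_ring_hom_closed:
  "graded_ring_hom A GA B GB f \<Longrightarrow> x \<in> carrier A \<Longrightarrow> f x \<in> carrier B"
  unfolding graded_ring_hom_def by (blast intro: ring_hom_closed)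

lemma graded_ring_hom_imp_graded_add_hom:
  "graded_ring_hom A GA B GB f \<Longrightarrow> graded_add_hom A GA B GB f"
  unfolding graded_ring_hom_def graded_add_hom_def by (simp add: ring_hom_def hom_def)

lemma graded_add_hom_comp:
  assumes "graded_add_hom A GA B GB f" and "graded_add_hom B GB C GC g"
  shows "graded_add_hom A GA C GC (g \<circ> f)"
  using assms hom_compose image_mono order_trans
  unfolding graded_add_hom_def image_comp[symmetric] by metis

lemma graded_ring_hom_inv_into:
  assumes "graded_ring A GA" and "graded_ring_hom A GA B GB f"
    and "bij_betw f (carrier A) (carrier B)" and "\<And>n. f ` GA n = GB n"
  shows "graded_ring_hom B GB A GA (inv_into (carrier A) f)"
proof -
  have "f \<in> ring_iso A B"
    using assms(2,3) by (simp add: ring_iso_def graded_ring_hom_def)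
  then have "inv_into (carrier A) f \<in> ring_hom B A"
    using ring_iso_set_sym assms(1) unfolding graded_ring_def ring_iso_def by blast
  moreover have "inv_into (carrier A) f ` GB n = GA n" for n
    using inv_into_image_cancel[OF bij_betw_imp_inj_on[OF assms(3)]
        graded_ring_subset_carrier[OF assms(1)]]
    by (simp add: assms(4)[symmetric])
  ultimately show ?thesis unfolding graded_ring_hom_def by blast
qed

locale equivariant_witt_complex =
  fixes p :: nat
    and E :: "nat \<Rightarrow> nat \<Rightarrow> 'e ring" and G :: "nat \<Rightarrow> nat \<Rightarrow> nat \<Rightarrow> 'e set"
    and D Res Tr C Rr :: "nat \<Rightarrow> nat \<Rightarrow> 'e \<Rightarrow> 'e"
    and Th :: "nat \<Rightarrow> nat \<Rightarrow> nat \<Rightarrow> 'e \<Rightarrow> 'e"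
    and Lam :: "nat \<Rightarrow> nat \<Rightarrow> (nat \<Rightarrow> 'r::comm_ring_1) \<Rightarrow> 'e"
  assumes equiv_witt_complex: "equiv_witt_complex p E G D Res Tr C Th Rr Lam"
begin

lemma dg_ring_E: "q \<le> s \<Longrightarrow> dg_ring (E s q) (G s q) (D s q)"
  using equiv_witt_complex unfolding equiv_witt_complex_def by (elim conjE) simp

lemma graded_ring_E: "q \<le> s \<Longrightarrow> graded_ring (E s q) (G s q)"
  using dg_ring_E unfolding dg_ring_def by blast

lemma ring_E: "q \<le> s \<Longrightarrow> ring (E s q)"
  using graded_ring_E unfolding graded_ring_def by blast

lemma Res_Tr_green:
  assumes "1 \<le> q" "q \<le> s"
  shows "graded_ring_hom (E s q) (G s q) (E s (q - 1)) (G s (q - 1)) (Res s q)"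
    and "graded_add_hom (E s (q - 1)) (G s (q - 1)) (E s q) (G s q) (Tr s q)"
    and "\<And>x y. x \<in> carrier (E s (q - 1)) \<Longrightarrow> y \<in> carrier (E s q) \<Longrightarrow>
           Tr s q (x \<otimes>\<^bsub>E s (q - 1)\<^esub> Res s q y) = Tr s q x \<otimes>\<^bsub>E s q\<^esub> y"
    and "\<And>x y. x \<in> carrier (E s (q - 1)) \<Longrightarrow> y \<in> carrier (E s q) \<Longrightarrow>
           Tr s q (Res s q y \<otimes>\<^bsub>E s (q - 1)\<^esub> x) = y \<otimes>\<^bsub>E s q\<^esub> Tr s q x"
  using equiv_witt_complex assms
  unfolding equiv_witt_complex_def cyc_green_functor_def by - (elim conjE, simp)+

lemma Th_iso:
  assumes "q \<le> k" "k < s"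
  shows "graded_ring_hom (E s q) (G s q) (E k q) (G k q) (Th s k q)"
    and "bij_betw (Th s k q) (carrier (E s q)) (carrier (E k q))"
    and "\<And>n. Th s k q ` G s q n = G k q n"
    and "\<And>x. x \<in> carrier (E s q) \<Longrightarrow> Th s k q (D s q x) = D k q (Th s k q x)"
    and "\<And>a. a \<in> carrier (witt_ring p (Suc q)) \<Longrightarrow> Th s k q (Lam s q a) = Lam k q a"
  using equiv_witt_complex assms unfolding equiv_witt_complex_def by - (elim conjE, simp)+

lemma Rr_Th:
  "\<lbrakk>1 \<le> q; q \<le> k; k < s; x \<in> carrier (E s q)\<rbrakk> \<Longrightarrow>
     Rr k q (Th s k q x) = Th (s - 1) (k - 1) (q - 1) (Rr s q x)"
  using equiv_witt_complex unfolding equiv_witt_complex_def by (elim conjE) simp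

lemma Rr_graded_ring_hom:
  "\<lbrakk>1 \<le> q; q \<le> s\<rbrakk> \<Longrightarrow>
     graded_ring_hom (E s q) (G s q) (E (s - 1) (q - 1)) (G (s - 1) (q - 1)) (Rr s q)"
  using equiv_witt_complex unfolding equiv_witt_complex_def by (elim conjE) simp

lemma Rr_Res_Tr:
  assumes "2 \<le> q" "q \<le> s"
  shows "\<And>x. x \<in> carrier (E s q) \<Longrightarrow> Rr s (q - 1) (Res s q x) = Res (s - 1) (q - 1) (Rr s q x)"
    and "\<And>x. x \<in> carrier (E s (q - 1)) \<Longrightarrow> Rr s q (Tr s q x) = Tr (s - 1) (q - 1) (Rr s (q - 1) x)"
  using equiv_witt_complex assms unfolding equiv_witt_complex_def by - (elim conjE, simp)+

lemma Lam_green: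
  assumes "q \<le> s"
  shows "Lam s q \<in> ring_hom (witt_ring p (Suc q)) (E s q)"
    and "Lam s q ` carrier (witt_ring p (Suc q)) \<subseteq> G s q 0"
  using equiv_witt_complex assms unfolding equiv_witt_complex_def by - (elim conjE, simp)+

lemma Res_Lam_V:
  assumes "1 \<le> q" "q \<le> s"
  shows "\<And>a. a \<in> carrier (witt_ring p (Suc q)) \<Longrightarrow> Res s q (Lam s q a) = Lam s (q - 1) (witt_F p q a)"
    and "\<And>b. b \<in> carrier (witt_ring p q) \<Longrightarrow> Lam s q (witt_V q b) = Tr s q (Lam s (q - 1) b)"
  using equiv_witt_complex assms unfolding equiv_witt_complex_def by - (elim conjE, simp)+

lemma Rr_Lam_D:
  assumes "1 \<le> q" "q \<le> s"
  shows "\<And>a. a \<in> carrier (witt_ring p (Suc q)) \<Longrightarrow> Rr s q (Lam s q a) = Lam (s - 1) (q - 1) (witt_R q a)"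
    and "\<And>x. x \<in> carrier (E s q) \<Longrightarrow> D (s - 1) (q - 1) (Rr s q x) = Rr s q (D s q x)"
  using equiv_witt_complex assms unfolding equiv_witt_complex_def by - (elim conjE, simp)+

lemma itres_D_ittr:
  "\<lbrakk>j \<le> q; q \<le> s; x \<in> carrier (E s j)\<rbrakk> \<Longrightarrow>
     itres (Res s) q (q - j) (D s q (ittr (Tr s) q (q - j) x)) = D s j x"
  using equiv_witt_complex unfolding equiv_witt_complex_def by (elim conjE) simp

lemma itres_ittr:
  "\<lbrakk>j \<le> q; q \<le> s; x \<in> carrier (E s j)\<rbrakk> \<Longrightarrow>
     itres (Res s) q (q - j) (ittr (Tr s) q (q - j) x) = [(p ^ (q - j))] \<cdot>\<^bsub>E s j\<^esub> x"
  using equiv_witt_complex unfolding equiv_witt_complex_def by (elim conjE) simp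

lemma Res_D_Lam_teich:
  "1 \<le> k \<Longrightarrow>
     Th k (k - 1) (k - 1) (Res k k (D k k (Lam k k (teich (Suc k) x)))) =
       (Lam (k - 1) (k - 1) (teich k x)) [^]\<^bsub>E (k - 1) (k - 1)\<^esub> (p - 1)
         \<otimes>\<^bsub>E (k - 1) (k - 1)\<^esub> D (k - 1) (k - 1) (Lam (k - 1) (k - 1) (teich k x))"
  using equiv_witt_complex unfolding equiv_witt_complex_def by (elim conjE) simp

lemma Res_Tr_top:
  shows "graded_ring_hom (E (Suc s) (Suc s)) (G (Suc s) (Suc s)) (E (Suc s) s) (G (Suc s) s)
           (Res (Suc s) (Suc s))"
    and "graded_add_hom (E (Suc s) s) (G (Suc s) s) (E (Suc s) (Suc s)) (G (Suc s) (Suc s))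
           (Tr (Suc s) (Suc s))"
    and "\<And>x y. x \<in> carrier (E (Suc s) s) \<Longrightarrow> y \<in> carrier (E (Suc s) (Suc s)) \<Longrightarrow>
           Tr (Suc s) (Suc s) (x \<otimes>\<^bsub>E (Suc s) s\<^esub> Res (Suc s) (Suc s) y) =
             Tr (Suc s) (Suc s) x \<otimes>\<^bsub>E (Suc s) (Suc s)\<^esub> y"
    and "\<And>x y. x \<in> carrier (E (Suc s) s) \<Longrightarrow> y \<in> carrier (E (Suc s) (Suc s)) \<Longrightarrow>
           Tr (Suc s) (Suc s) (Res (Suc s) (Suc s) y \<otimes>\<^bsub>E (Suc s) s\<^esub> x) =
             y \<otimes>\<^bsub>E (Suc s) (Suc s)\<^esub> Tr (Suc s) (Suc s) x"
  using Res_Tr_green[of "Suc s" "Suc s"] by simp_all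

lemma Res_top_closed:
  "x \<in> carrier (E (Suc s) (Suc s)) \<Longrightarrow> Res (Suc s) (Suc s) x \<in> carrier (E (Suc s) s)"
  by (rule graded_ring_hom_closed[OF Res_Tr_top(1)])

abbreviation frob :: "nat \<Rightarrow> 'e \<Rightarrow> 'e" where
  "frob s x \<equiv> Th (Suc s) s s (Res (Suc s) (Suc s) x)"

abbreviation iso_inv :: "nat \<Rightarrow> 'e \<Rightarrow> 'e" where
  "iso_inv s \<equiv> inv_into (carrier (E (Suc s) s)) (Th (Suc s) s s)"

abbreviation ver :: "nat \<Rightarrow> 'e \<Rightarrow> 'e" where
  "ver s y \<equiv> Tr (Suc s) (Suc s) (iso_inv s y)"

lemma iso_inv_closed: "y \<in> carrier (E s s) \<Longrightarrow> iso_inv s y \<in> carrier (E (Suc s) s)"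
  using Th_iso(2)[OF order_refl lessI] by (metis bij_betw_def inv_into_into)

lemma Th_iso_inv: "y \<in> carrier (E s s) \<Longrightarrow> Th (Suc s) s s (iso_inv s y) = y"
  using Th_iso(2)[OF order_refl lessI] by (rule bij_betw_inv_into_right)

lemma iso_inv_Th: "x \<in> carrier (E (Suc s) s) \<Longrightarrow> iso_inv s (Th (Suc s) s s x) = x"
  using Th_iso(2)[OF order_refl lessI] by (rule bij_betw_inv_into_left)

lemma iso_inv_graded_ring_hom:
  "graded_ring_hom (E s s) (G s s) (E (Suc s) s) (G (Suc s) s) (iso_inv s)"
  by (rule graded_ring_hom_inv_into[OF graded_ring_E Th_iso(1-3)]) simp_all

lemma Rr_top_graded_ring_hom:
  "graded_ring_hom (E (Suc s) (Suc s)) (G (Suc s) (Suc s)) (E s s) (G s s) (Rr (Suc s) (Suc s))"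
  using Rr_graded_ring_hom[of "Suc s" "Suc s"] by simp

lemma Rr_top_D:
  "x \<in> carrier (E (Suc s) (Suc s)) \<Longrightarrow>
     Rr (Suc s) (Suc s) (D (Suc s) (Suc s) x) = D s s (Rr (Suc s) (Suc s) x)"
  using Rr_Lam_D(2)[of "Suc s" "Suc s"] by simp

lemma Lam_witt_R:
  "a \<in> carrier (witt_ring p (Suc (Suc s))) \<Longrightarrow>
     Lam s s (witt_R (Suc s) a) = Rr (Suc s) (Suc s) (Lam (Suc s) (Suc s) a)"
  using Rr_Lam_D(1)[of "Suc s" "Suc s"] by simp

lemma frob_graded_ring_hom:
  "graded_ring_hom (E (Suc s) (Suc s)) (G (Suc s) (Suc s)) (E s s) (G s s) (frob s)"
  using graded_ring_hom_comp[OF Res_Tr_top(1) Th_iso(1)[OF order_refl lessI]]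
  by (simp add: comp_def)

lemma frob_Rr:
  assumes "x \<in> carrier (E (Suc (Suc s)) (Suc (Suc s)))"
  shows "frob s (Rr (Suc (Suc s)) (Suc (Suc s)) x) = Rr (Suc s) (Suc s) (frob (Suc s) x)"
  using Res_top_closed[OF assms] Rr_Res_Tr(1)[of "Suc (Suc s)" "Suc (Suc s)" x]
    Rr_Th[of "Suc s" "Suc s" "Suc (Suc s)"] assms
  by simp

lemma Lam_witt_F:
  assumes "a \<in> carrier (witt_ring p (Suc (Suc s)))"
  shows "Lam s s (witt_F p (Suc s) a) = frob s (Lam (Suc s) (Suc s) a)"
proof -
  have "witt_F p (Suc s) a \<in> carrier (witt_ring p (Suc s))"
    by (simp add: witt_ring_def witt_F_def)
  then show ?thesis
    using Res_Lam_V(1)[of "Suc s" "Suc s" a] Th_iso(5)[OF order_refl lessI] assms by simp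
qed

lemma frob_D_Lam_teich:
  "frob s (D (Suc s) (Suc s) (Lam (Suc s) (Suc s) (teich (Suc (Suc s)) a))) =
     Lam s s (teich (Suc s) a) [^]\<^bsub>E s s\<^esub> (p - 1) \<otimes>\<^bsub>E s s\<^esub> D s s (Lam s s (teich (Suc s) a))"
  using Res_D_Lam_teich[of "Suc s" a] by simp

lemma ver_graded_add_hom:
  "graded_add_hom (E s s) (G s s) (E (Suc s) (Suc s)) (G (Suc s) (Suc s)) (ver s)"
  using graded_add_hom_comp[OF graded_ring_hom_imp_graded_add_hom[OF iso_inv_graded_ring_hom]
      Res_Tr_top(2)]
  by (simp add: comp_def)

lemma Rr_iso_inv:
  assumes "y \<in> carrier (E (Suc s) (Suc s))"
  shows "Rr (Suc (Suc s)) (Suc s) (iso_inv (Suc s) y) = iso_inv s (Rr (Suc s) (Suc s) y)"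
proof -
  have "iso_inv (Suc s) y \<in> carrier (E (Suc (Suc s)) (Suc s))"
    using iso_inv_closed assms .
  moreover have "Rr (Suc (Suc s)) (Suc s) (iso_inv (Suc s) y) \<in> carrier (E (Suc s) s)"
    using graded_ring_hom_closed[OF Rr_graded_ring_hom[of "Suc s" "Suc (Suc s)"]] calculation
    by simp
  ultimately show ?thesis
    using Rr_Th[of "Suc s" "Suc s" "Suc (Suc s)"] Th_iso_inv[OF assms] iso_inv_Th by force
qed

lemma Rr_ver:
  assumes "y \<in> carrier (E (Suc s) (Suc s))"
  shows "Rr (Suc (Suc s)) (Suc (Suc s)) (ver (Suc s) y) = ver s (Rr (Suc s) (Suc s) y)"
  using Rr_Res_Tr(2)[of "Suc (Suc s)" "Suc (Suc s)"] iso_inv_closed[OF assms] Rr_iso_inv[OF assms]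
  by simp

lemma Lam_witt_V:
  assumes "a \<in> carrier (witt_ring p (Suc s))"
  shows "Lam (Suc s) (Suc s) (witt_V (Suc s) a) = ver s (Lam s s a)"
proof -
  have "Lam (Suc s) s a \<in> carrier (E (Suc s) s)"
    using Lam_green(1)[of s "Suc s"] assms by (simp add: ring_hom_closed)
  then have "iso_inv s (Lam s s a) = Lam (Suc s) s a"
    using iso_inv_Th Th_iso(5)[OF order_refl lessI] assms by metis
  then show ?thesis
    using Res_Lam_V(2)[of "Suc s" "Suc s"] assms by simp
qed

lemma iso_inv_frob:
  "x \<in> carrier (E (Suc s) (Suc s)) \<Longrightarrow> iso_inv s (frob s x) = Res (Suc s) (Suc s) x"
  by (rule iso_inv_Th[OF Res_top_closed])

lemma ver_projection_formula:
  assumes "x \<in> carrier (E (Suc s) (Suc s))" and "y \<in> carrier (E s s)"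
  shows "ver s (frob s x \<otimes>\<^bsub>E s s\<^esub> y) = x \<otimes>\<^bsub>E (Suc s) (Suc s)\<^esub> ver s y"
    and "ver s (y \<otimes>\<^bsub>E s s\<^esub> frob s x) = ver s y \<otimes>\<^bsub>E (Suc s) (Suc s)\<^esub> x"
proof -
  have inv_hom: "iso_inv s \<in> ring_hom (E s s) (E (Suc s) s)"
    using iso_inv_graded_ring_hom unfolding graded_ring_hom_def by blast
  have fx: "frob s x \<in> carrier (E s s)"
    by (rule graded_ring_hom_closed[OF frob_graded_ring_hom assms(1)])
  show "ver s (frob s x \<otimes>\<^bsub>E s s\<^esub> y) = x \<otimes>\<^bsub>E (Suc s) (Suc s)\<^esub> ver s y"
    using ring_hom_mult[OF inv_hom fx assms(2)] iso_inv_frob[OF assms(1)] Res_top_closed[OF assms(1)]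
      Res_Tr_top(4) iso_inv_closed[OF assms(2)] assms(1) by simp
  show "ver s (y \<otimes>\<^bsub>E s s\<^esub> frob s x) = ver s y \<otimes>\<^bsub>E (Suc s) (Suc s)\<^esub> x"
    using ring_hom_mult[OF inv_hom assms(2) fx] iso_inv_frob[OF assms(1)] Res_top_closed[OF assms(1)]
      Res_Tr_top(3) iso_inv_closed[OF assms(2)] assms(1) by simp
qed

lemma frob_ver:
  assumes "y \<in> carrier (E s s)"
  shows "frob s (D (Suc s) (Suc s) (ver s y)) = D s s y"
    and "frob s (ver s y) = [p] \<cdot>\<^bsub>E s s\<^esub> y"
proof -
  have z: "iso_inv s y \<in> carrier (E (Suc s) s)"
    using iso_inv_closed[OF assms] .
  have Th_hom: "Th (Suc s) s s \<in> ring_hom (E (Suc s) s) (E s s)"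
    using Th_iso(1)[OF order_refl lessI] unfolding graded_ring_hom_def by blast
  show "frob s (D (Suc s) (Suc s) (ver s y)) = D s s y"
    using itres_D_ittr[of s "Suc s" "Suc s", OF _ _ z] Th_iso(4)[OF order_refl lessI z]
      Th_iso_inv[OF assms] by simp
  show "frob s (ver s y) = [p] \<cdot>\<^bsub>E s s\<^esub> y"
    using itres_ittr[of s "Suc s" "Suc s", OF _ _ z] Th_iso_inv[OF assms]
      ring_hom_add_pow[OF Th_hom ring_E ring_E z, of p] by simp
qed

lemma witt_complex_top:
  "witt_complex p (\<lambda>s. E s s) (\<lambda>s. G s s) (\<lambda>s. D s s) (\<lambda>s. Rr (Suc s) (Suc s)) (\<lambda>s. Lam s s)
     frob ver"
  unfolding witt_complex_def
  using dg_ring_E Rr_top_graded_ring_hom Rr_top_D Lam_green Lam_witt_R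
    frob_graded_ring_hom frob_Rr Lam_witt_F frob_D_Lam_teich
    ver_graded_add_hom Rr_ver Lam_witt_V ver_projection_formula frob_ver
  by simp

end

theorem mainTheorem4:
  fixes p :: nat
    and E :: "nat \<Rightarrow> nat \<Rightarrow> 'e ring" and G :: "nat \<Rightarrow> nat \<Rightarrow> nat \<Rightarrow> 'e set"
    and D Res Tr C Rr :: "nat \<Rightarrow> nat \<Rightarrow> 'e \<Rightarrow> 'e"
    and Th :: "nat \<Rightarrow> nat \<Rightarrow> nat \<Rightarrow> 'e \<Rightarrow> 'e"
    and Lam :: "nat \<Rightarrow> nat \<Rightarrow> (nat \<Rightarrow> 'r::comm_ring_1) \<Rightarrow> 'e"
  assumes "prime p" and "odd p"
    and "\<forall>l::nat. prime l \<and> l \<noteq> p \<longrightarrow> (\<exists>u::'r. of_nat l * u = 1)"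
    and "equiv_witt_complex p E G D Res Tr C Th Rr Lam"
  shows "witt_complex p (\<lambda>s. E s s) (\<lambda>s. G s s) (\<lambda>s. D s s) (\<lambda>s. Rr (Suc s) (Suc s)) (\<lambda>s. Lam s s)
           (\<lambda>s x. Th (Suc s) s s (Res (Suc s) (Suc s) x))
           (\<lambda>s y. Tr (Suc s) (Suc s) (inv_into (carrier (E (Suc s) s)) (Th (Suc s) s s) y))"
  using equivariant_witt_complex.witt_complex_top[OF equivariant_witt_complex.intro[OF assms(4)]] .

end
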